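(* Let $\mathcal{A}=\langle\Sigma,Q,q_0,\delta,\alpha\rangle$ be a nice GFG-tNCW and let $\mathcal{E}\subseteq Q\times\Sigma\times Q$ be an allowed set for $\mathcal{A}$. Let $q,s\in Q$, $\sigma\in\Sigma$, and let $\langle q,\sigma,q'\rangle\in\Delta$ be a transition of $\mathcal{A}$ and $\langle s,\sigma,s'\rangle\in\Delta_\mathcal{E}$ a transition of $\mathcal{A}_\mathcal{E}$. If $q\sim_\mathcal{A}s$, then $q'\sim_\mathcal{A}s'$.
   Context: A tNCW is $\mathcal{A}=\langle\Sigma,Q,q_0,\delta,\alpha\rangle$: finite alphabet $\Sigma$, finite state set $Q$, initial state $q_0$, transition function $\delta:Q\times\Sigma\to 2^Q\setminus\{\emptyset\}$ with transition relation $\Delta=\{\langle q,\sigma,s\rangle:s\in\delta(q,\sigma)\}$, and $\alpha\subseteq\Delta$. $\alpha$-transitions are those in $\alpha$, $\bar\alpha$-transitions those in $\Delta\setminus\alpha$; $\delta^{\bar\alpha}(q,\sigma)$ denotes the $\sigma$-successors via $\bar\alpha$-transitions. A run on $w=\sigma_1\sigma_2\cdots$ is $r_0r_1\cdots$ with $r_0=q_0$, $r_{i+1}\in\delta(r_i,\sigma_{i+1})$; accepting iff it traverses $\alpha$-transitions only finitely often; $L(\mathcal{A})$ the accepted language. $\mathcal{A}^q$ is $\mathcal{A}$ with initial state $q$; $q\sim_\mathcal{A}s$ iff $L(\mathcal{A}^q)=L(\mathcal{A}^s)$. GFG: there is $f:\Sigma^*\to Q$ with $f(\epsilon)=q_0$,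 $\langle f(u),\sigma,f(u\sigma)\rangle\in\Delta$ for all $u,\sigma$, and for each $w\in L(\mathcal{A})$ the run $f(w[1,0]),f(w[1,1]),\dots$ is accepting; $q$ is GFG if $\mathcal{A}^q$ is. Semantically deterministic: all $\sigma$-successors of a state pairwise $\sim$; safe deterministic: $|\delta^{\bar\alpha}(q,\sigma)|\le1$; normal: a $\bar\alpha$-path from $q$ to $s$ implies one from $s$ to $q$. Nice: all states reachable and GFG, normal, safe deterministic, semantically deterministic. A triple $\langle q,\sigma,s\rangle\in Q\times\Sigma\times Q$ is an allowed transition of $\mathcal{A}$ if there is $s''\in Q$ with $s\sim_\mathcal{A}s''$ and $\langle q,\sigma,s''\rangle\in\Delta$. A set $\mathcal{E}\subseteq Q\times\Sigma\times Q$ is an allowed set if all its triples are allowed transitions of $\mathcal{A}$. For such $\mathcal{E}$, $\mathcal{A}_\mathcal{E}=\langle\Sigma,Q,q_0,\delta_\mathcal{E},\alpha_\mathcal{E}\rangle$ is the tNCW with transition relation $\Delta_\mathcal{E}=\Delta\cup\mathcal{E}$ and $\alpha_\mathcal{E}=\alpha\cup\mathcal{E}$. *)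

theory Defs
  imports Main
begin

record ('s, 'a) tncw =
  alph   :: "'a set"
  states :: "'s set"
  init   :: 's
  trans  :: "'s \<Rightarrow> 'a \<Rightarrow> 's set"
  acc    :: "('s \<times> 'a \<times> 's) set"

definition Delta :: "('s, 'a) tncw \<Rightarrow> ('s \<times> 'a \<times> 's) set" where
  "Delta A = {(q, \<sigma>, s). q \<in> states A \<and> \<sigma> \<in> alph A \<and> s \<in> trans A q \<sigma>}"

definition wf_tncw :: "('s, 'a) tncw \<Rightarrow> bool" where
  "wf_tncw A \<longleftrightarrow> finite (alph A) \<and> finite (states A) \<and> init A \<in> states A
     \<and> (\<forall>q \<in> states A. \<forall>\<sigma> \<in> alph A. trans A q \<sigma> \<noteq> {} \<and> trans A q \<sigma> \<subseteq> states A)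
     \<and> acc A \<subseteq> Delta A"

text \<open>Infinite words are maps nat => letter; w i is the (i+1)-th letter.\<close>
definition is_word :: "('s, 'a) tncw \<Rightarrow> (nat \<Rightarrow> 'a) \<Rightarrow> bool" where
  "is_word A w \<longleftrightarrow> (\<forall>i. w i \<in> alph A)"

definition is_run :: "('s, 'a) tncw \<Rightarrow> 's \<Rightarrow> (nat \<Rightarrow> 'a) \<Rightarrow> (nat \<Rightarrow> 's) \<Rightarrow> bool" where
  "is_run A q w r \<longleftrightarrow> r 0 = q \<and> (\<forall>i. r (Suc i) \<in> trans A (r i) (w i))"

definition accepting_run :: "('s, 'a) tncw \<Rightarrow> (nat \<Rightarrow> 'a) \<Rightarrow> (nat \<Rightarrow> 's) \<Rightarrow> bool" where
  "accepting_run A w r \<longleftrightarrow> finite {i. (r i, w i, r (Suc i)) \<in> acc A}"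

definition lang :: "('s, 'a) tncw \<Rightarrow> 's \<Rightarrow> (nat \<Rightarrow> 'a) set" where
  "lang A q = {w. is_word A w \<and> (\<exists>r. is_run A q w r \<and> accepting_run A w r)}"

definition equiv_st :: "('s, 'a) tncw \<Rightarrow> 's \<Rightarrow> 's \<Rightarrow> bool" where
  "equiv_st A q s \<longleftrightarrow> lang A q = lang A s"

definition GFG_state :: "('s, 'a) tncw \<Rightarrow> 's \<Rightarrow> bool" where
  "GFG_state A q \<longleftrightarrow> (\<exists>f :: 'a list \<Rightarrow> 's. f [] = q
     \<and> (\<forall>u \<in> lists (alph A). \<forall>\<sigma> \<in> alph A. (f u, \<sigma>, f (u @ [\<sigma>])) \<in> Delta A)
     \<and> (\<forall>w \<in> lang A q. accepting_run A w (\<lambda>i. f (map w [0..<i]))))"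

definition GFG :: "('s, 'a) tncw \<Rightarrow> bool" where
  "GFG A \<longleftrightarrow> GFG_state A (init A)"

definition trans_nacc :: "('s, 'a) tncw \<Rightarrow> 's \<Rightarrow> 'a \<Rightarrow> 's set" where
  "trans_nacc A q \<sigma> = {s. (q, \<sigma>, s) \<in> Delta A - acc A}"

definition reachable :: "('s, 'a) tncw \<Rightarrow> 's set" where
  "reachable A = {s. (init A, s) \<in> {(q, s). \<exists>\<sigma>. (q, \<sigma>, s) \<in> Delta A}\<^sup>*}"

definition nacc_path :: "('s, 'a) tncw \<Rightarrow> 's \<Rightarrow> 's \<Rightarrow> bool" where
  "nacc_path A q s \<longleftrightarrow> (q, s) \<in> {(q, s). \<exists>\<sigma>. (q, \<sigma>, s) \<in> Delta A - acc A}\<^sup>*"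

definition safe_deterministic :: "('s, 'a) tncw \<Rightarrow> bool" where
  "safe_deterministic A \<longleftrightarrow>
     (\<forall>q \<in> states A. \<forall>\<sigma> \<in> alph A. card (trans_nacc A q \<sigma>) \<le> 1)"

definition normal :: "('s, 'a) tncw \<Rightarrow> bool" where
  "normal A \<longleftrightarrow> (\<forall>q \<in> states A. \<forall>s \<in> states A. nacc_path A q s \<longrightarrow> nacc_path A s q)"

definition semantically_deterministic :: "('s, 'a) tncw \<Rightarrow> bool" where
  "semantically_deterministic A \<longleftrightarrow> (\<forall>q \<in> states A. \<forall>\<sigma> \<in> alph A.
     \<forall>s1 \<in> trans A q \<sigma>. \<forall>s2 \<in> trans A q \<sigma>. equiv_st A s1 s2)"

definition nice :: "('s, 'a) tncw \<Rightarrow> bool" where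
  "nice A \<longleftrightarrow> states A \<subseteq> reachable A \<and> (\<forall>q \<in> states A. GFG_state A q)
     \<and> normal A \<and> safe_deterministic A \<and> semantically_deterministic A"

definition allowed_transition :: "('s, 'a) tncw \<Rightarrow> 's \<times> 'a \<times> 's \<Rightarrow> bool" where
  "allowed_transition A t \<longleftrightarrow> (case t of (q, \<sigma>, s) \<Rightarrow>
     \<exists>s'' \<in> states A. equiv_st A s s'' \<and> (q, \<sigma>, s'') \<in> Delta A)"

definition allowed_set :: "('s, 'a) tncw \<Rightarrow> ('s \<times> 'a \<times> 's) set \<Rightarrow> bool" where
  "allowed_set A E \<longleftrightarrow> E \<subseteq> states A \<times> alph A \<times> states A \<and> (\<forall>t \<in> E. allowed_transition A t)"

definition augment :: "('s, 'a) tncw \<Rightarrow> ('s \<times> 'a \<times> 's) set \<Rightarrow> ('s, 'a) tncw" where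
  "augment A E = A\<lparr> trans := (\<lambda>q \<sigma>. trans A q \<sigma> \<union> {s. (q, \<sigma>, s) \<in> E}),
                    acc := acc A \<union> E \<rparr>"

end

theory Submission
  imports Defs "HOL-Library.Nat_Bijection"
begin

text \<open>Writing \<open>case_nat \<sigma> w\<close>
  for the word \<open>\<sigma>w\<close>, the language of any \<open>\<sigma>\<close>-successor of \<open>q\<close>
  is the residual \<open>\<sigma>\<^sup>-\<^sup>1 L(\<A>\<^sup>q)\<close>: an accepting run on \<open>\<sigma>w\<close> passes through some \<open>\<sigma>\<close>-successor and
  its tail accepts \<open>w\<close>, and all \<open>\<sigma>\<close>-successors are equivalent. Hence equivalent states have
  equivalent \<open>\<sigma>\<close>-successors, and an allowed transition of \<open>\<A>\<^sub>\<E>\<close> leads to a state equivalent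
  to the target of a transition of \<open>\<A>\<close>.\<close>

lemma accepting_run_case_nat_iff:
  "accepting_run A (case_nat \<sigma> w) (case_nat q r) \<longleftrightarrow> accepting_run A w r"
proof -
  let ?acc_steps = "\<lambda>w r. {i. (r i, w i, r (Suc i)) \<in> acc A}"
  have "finite (?acc_steps (case_nat \<sigma> w) (case_nat q r))
      \<longleftrightarrow> finite (Suc -` ?acc_steps (case_nat \<sigma> w) (case_nat q r))"
    by (rule finite_vimage_Suc_iff [symmetric])
  also have "Suc -` ?acc_steps (case_nat \<sigma> w) (case_nat q r) = ?acc_steps w r"
    by auto
  finally show ?thesis
    unfolding accepting_run_def .
qed

lemma is_run_case_nat_iff:
  "is_run A q (case_nat \<sigma> w) (case_nat q r) \<longleftrightarrow> r 0 \<in> trans A q \<sigma> \<and> is_run A (r 0) w r"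
  unfolding is_run_def by (auto split: nat.split)

lemma case_nat_in_lang_iff:
  "case_nat \<sigma> w \<in> lang A q \<longleftrightarrow> \<sigma> \<in> alph A \<and> (\<exists>q' \<in> trans A q \<sigma>. w \<in> lang A q')"
proof
  assume "case_nat \<sigma> w \<in> lang A q"
  then obtain \<rho> where word: "is_word A (case_nat \<sigma> w)" and run: "is_run A q (case_nat \<sigma> w) \<rho>"
    and acc: "accepting_run A (case_nat \<sigma> w) \<rho>"
    unfolding lang_def by blast
  define r where "r i = \<rho> (Suc i)" for i
  have \<rho>: "\<rho> = case_nat q r"
    using run unfolding is_run_def r_def by (auto split: nat.split)
  have "case_nat \<sigma> w 0 \<in> alph A" "case_nat \<sigma> w (Suc i) \<in> alph A" for i
    using word unfolding is_word_def by blast+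
  then have "\<sigma> \<in> alph A" and "is_word A w"
    unfolding is_word_def by simp_all
  moreover have "r 0 \<in> trans A q \<sigma>" and "is_run A (r 0) w r"
    using run unfolding \<rho> is_run_case_nat_iff by simp_all
  moreover have "accepting_run A w r"
    using acc unfolding \<rho> accepting_run_case_nat_iff .
  ultimately show "\<sigma> \<in> alph A \<and> (\<exists>q' \<in> trans A q \<sigma>. w \<in> lang A q')"
    unfolding lang_def by blast
next
  assume "\<sigma> \<in> alph A \<and> (\<exists>q' \<in> trans A q \<sigma>. w \<in> lang A q')"
  then obtain r where "\<sigma> \<in> alph A" "is_word A w" "r 0 \<in> trans A q \<sigma>" "is_run A (r 0) w r"
    "accepting_run A w r"
    unfolding lang_def is_run_def by blast
  then have "is_word A (case_nat \<sigma> w)" "is_run A q (case_nat \<sigma> w) (case_nat q r)"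
    "accepting_run A (case_nat \<sigma> w) (case_nat q r)"
    by (auto simp: is_word_def is_run_case_nat_iff accepting_run_case_nat_iff split: nat.split)
  then show "case_nat \<sigma> w \<in> lang A q"
    unfolding lang_def by blast
qed

lemma lang_successor_eq_residual:
  assumes "semantically_deterministic A"
    and "q \<in> states A" and "\<sigma> \<in> alph A" and "q' \<in> trans A q \<sigma>"
  shows "lang A q' = {w. case_nat \<sigma> w \<in> lang A q}"
proof -
  have "lang A q'' = lang A q'" if "q'' \<in> trans A q \<sigma>" for q''
    using assms that unfolding semantically_deterministic_def equiv_st_def by blast
  then show ?thesis
    using assms(3,4) unfolding case_nat_in_lang_iff by blast
qed

lemma equiv_st_successors:
  assumes "semantically_deterministic A"
    and "q \<in> states A" and "s \<in> states A" and "\<sigma> \<in> alph A"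
    and "q' \<in> trans A q \<sigma>" and "s' \<in> trans A s \<sigma>"
    and "equiv_st A q s"
  shows "equiv_st A q' s'"
  using assms lang_successor_eq_residual [of A] unfolding equiv_st_def by metis

theorem mainTheorem7:
  fixes A :: "('s, 'a) tncw" and E :: "('s \<times> 'a \<times> 's) set"
  assumes "wf_tncw A" and "nice A" and "GFG A"
    and "allowed_set A E"
    and "q \<in> states A" and "s \<in> states A" and "\<sigma> \<in> alph A"
    and "(q, \<sigma>, q') \<in> Delta A"
    and "(s, \<sigma>, s') \<in> Delta (augment A E)"
    and "equiv_st A q s"
  shows "equiv_st A q' s'"
proof -
  have sd: "semantically_deterministic A"
    using \<open>nice A\<close> unfolding nice_def by blast
  have q': "q' \<in> trans A q \<sigma>"
    using \<open>(q, \<sigma>, q') \<in> Delta A\<close> unfolding Delta_def by simp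
  obtain s'' where s'': "s'' \<in> trans A s \<sigma>" and "equiv_st A s'' s'"
  proof (cases "s' \<in> trans A s \<sigma>")
    case True
    then show ?thesis using that unfolding equiv_st_def by blast
  next
    case False
    then have "(s, \<sigma>, s') \<in> E"
      using \<open>(s, \<sigma>, s') \<in> Delta (augment A E)\<close> unfolding Delta_def augment_def by simp
    then show ?thesis
      using that \<open>allowed_set A E\<close>
      unfolding allowed_set_def allowed_transition_def Delta_def equiv_st_def by fastforce
  qed
  moreover have "equiv_st A q' s''"
    using equiv_st_successors [OF sd assms(5-7) q' s'' \<open>equiv_st A q s\<close>] .
  ultimately show ?thesis
    unfolding equiv_st_def by simp
qed

end
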